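(* Let $L,M,N$ be integers with $\min\{L,M,N\}\ge 2$ and let ${\cal R}=[0,L]\times[0,M]\times[0,N]$. Up to a permutation of the four colors, there is exactly one slab-type coloring of ${\cal R}$.
   Context: Unit cubes are sets $[x,x+1]\times[y,y+1]\times[z,z+1]$ with $(x,y,z)\in\mathbb{Z}^3$. A slab is a $2\times2\times1$ parallelepiped (in any of the three orientations) which is a union of four unit cubes. A slab-type coloring of a region ${\cal R}$ (a finite union of unit cubes) is an assignment of one of four colors to each unit cube of ${\cal R}$ such that every slab contained in ${\cal R}$ covers exactly one cube of each color. *)

theory Defs
  imports Main
begin

text \<open>A unit cube [x,x+1]x[y,y+1]x[z,z+1] is identified with its corner (x,y,z).
  Colors are the four numbers 0,1,2,3.\<close>

type_synonym cube = "int \<times> int \<times> int"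

definition box_cubes :: "int \<Rightarrow> int \<Rightarrow> int \<Rightarrow> cube set" where
  "box_cubes L M N = {(x,y,z). 0 \<le> x \<and> x < L \<and> 0 \<le> y \<and> y < M \<and> 0 \<le> z \<and> z < N}"

definition slabs :: "cube set set" where
  "slabs = (\<Union>(a,b,c). {
      {(a+i, b+j, c) | i j. i \<in> {0,1} \<and> j \<in> {0,1}},
      {(a+i, b, c+k) | i k. i \<in> {0,1} \<and> k \<in> {0,1}},
      {(a, b+j, c+k) | j k. j \<in> {0,1} \<and> k \<in> {0,1}}})"

definition colors :: "nat set" where
  "colors = {0..<4}"

definition slab_type_coloring :: "cube set \<Rightarrow> (cube \<Rightarrow> nat) \<Rightarrow> bool" where
  "slab_type_coloring R col \<longleftrightarrow>
     (\<forall>p\<in>R. col p \<in> colors) \<and>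
     (\<forall>S\<in>slabs. S \<subseteq> R \<longrightarrow> bij_betw col S colors)"

end

theory Submission
  imports Defs
begin

(* In a 2x2x2 block both horizontal slabs carry all four colors, and each top cube shares a
   vertical slab with three of the four bottom cubes; so every cube has the color of the
   opposite corner of the block. Chaining such diagonal steps, which is possible inside the box
   because every side is at least 2, a slab-type coloring is constant on the classes of the
   lattice of vectors whose three coordinates have equal parity. The four classes are
   represented by the base slab {0,1} x {0,1} x {0}, on which any slab-type coloring is a
   bijection onto the colors; hence any two colorings differ by a permutation of the colors.
   The classes themselves give a coloring, indexed by the parities of x + z and y + z. *)

lemma four_point_set: "{f i j | i j. i \<in> {0,1} \<and> j \<in> {0,1}} = {f 0 0, f 1 0, f 0 1, f 1 1}"
  by blast

lemma slabs_explicit: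
  "slabs = (\<Union>(a,b,d). {{(a,b,d), (a+1,b,d), (a,b+1,d), (a+1,b+1,d)},
                          {(a,b,d), (a+1,b,d), (a,b,d+1), (a+1,b,d+1)},
                          {(a,b,d), (a,b+1,d), (a,b,d+1), (a,b+1,d+1)}})"
  unfolding slabs_def four_point_set by simp

lemma colors_eq: "colors = {0,1,2,3}"
  by (auto simp: colors_def)

lemma bij_betw_four_colors_iff:
  "bij_betw c {p1,p2,p3,p4} colors \<longleftrightarrow>
     distinct [c p1, c p2, c p3, c p4] \<and> {c p1, c p2, c p3, c p4} = colors"
proof
  assume bij: "bij_betw c {p1,p2,p3,p4} colors"
  then have "{c p1, c p2, c p3, c p4} = colors"
    by (simp add: bij_betw_def)
  moreover have "card colors = 4"
    by (simp add: colors_def)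
  ultimately have "card (set [c p1, c p2, c p3, c p4]) = length [c p1, c p2, c p3, c p4]"
    by simp
  then show "distinct [c p1, c p2, c p3, c p4] \<and> {c p1, c p2, c p3, c p4} = colors"
    using \<open>{c p1, c p2, c p3, c p4} = colors\<close> card_distinct by blast
next
  assume "distinct [c p1, c p2, c p3, c p4] \<and> {c p1, c p2, c p3, c p4} = colors"
  then show "bij_betw c {p1,p2,p3,p4} colors"
    by (auto simp: bij_betw_def inj_on_def)
qed

lemma slab_xy: "{(a,b,d), (a+1,b,d), (a,b+1,d), (a+1,b+1,d)} \<in> slabs"
  unfolding slabs_explicit by blast

lemma slab_xz: "{(a,b,d), (a+1,b,d), (a,b,d+1), (a+1,b,d+1)} \<in> slabs"
  unfolding slabs_explicit by blast

lemma slab_yz: "{(a,b,d), (a,b+1,d), (a,b,d+1), (a,b+1,d+1)} \<in> slabs"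
  unfolding slabs_explicit by blast

definition standard_coloring :: "cube \<Rightarrow> nat" where
  "standard_coloring = (\<lambda>(x,y,z). (if even (x+z) then 0 else 1) + (if even (y+z) then 0 else 2))"

lemma standard_coloring_slab:
  assumes "S \<in> slabs"
  shows "bij_betw standard_coloring S colors"
  using assms unfolding slabs_explicit
  by (auto simp only: bij_betw_four_colors_iff) (auto simp: colors_eq standard_coloring_def)

lemma slab_type_coloring_standard: "slab_type_coloring R standard_coloring"
proof -
  have "standard_coloring p \<in> colors" for p
    by (cases p) (simp add: standard_coloring_def colors_eq)
  then show ?thesis
    unfolding slab_type_coloring_def using standard_coloring_slab by blast
qed

lemma slab_type_coloring_bij:
  "slab_type_coloring R c \<Longrightarrow> S \<in> slabs \<Longrightarrow> S \<subseteq> R \<Longrightarrow> bij_betw c S colors"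
  unfolding slab_type_coloring_def by blast

lemma opposite_corners_same_color:
  assumes col: "slab_type_coloring R c" and block: "{a,a+1} \<times> {b,b+1} \<times> {d,d+1} \<subseteq> R"
  shows "c (a,b,d) = c (a+1,b+1,d+1) \<and> c (a+1,b,d) = c (a,b+1,d+1) \<and>
         c (a,b+1,d) = c (a+1,b,d+1) \<and> c (a+1,b+1,d) = c (a,b,d+1)"
proof -
  have face: "distinct [c p1, c p2, c p3, c p4] \<and> {c p1, c p2, c p3, c p4} = colors"
    if "{p1,p2,p3,p4} \<in> slabs" "{p1,p2,p3,p4} \<subseteq> R" for p1 p2 p3 p4
    unfolding bij_betw_four_colors_iff[symmetric] by (rule slab_type_coloring_bij[OF col that])
  have bottom: "{c (a,b,d), c (a+1,b,d), c (a,b+1,d), c (a+1,b+1,d)} = colors"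
    and top: "{c (a,b,d+1), c (a+1,b,d+1), c (a,b+1,d+1), c (a+1,b+1,d+1)} = colors"
    using face[OF slab_xy] block by auto
  have front_back: "distinct [c (a,b+j,d), c (a+1,b+j,d), c (a,b+j,d+1), c (a+1,b+j,d+1)]"
    if "j \<in> {0,1}" for j
    using face[OF slab_xz] block that by auto
  have left_right: "distinct [c (a+i,b,d), c (a+i,b+1,d), c (a+i,b,d+1), c (a+i,b+1,d+1)]"
    if "i \<in> {0,1}" for i
    using face[OF slab_yz] block that by auto
  show ?thesis
    using bottom top front_back[of 0] front_back[of 1] left_right[of 0] left_right[of 1] by auto
qed

lemma mem_box_cubes [simp]:
  "(x,y,z) \<in> box_cubes L M N \<longleftrightarrow> 0 \<le> x \<and> x < L \<and> 0 \<le> y \<and> y < M \<and> 0 \<le> z \<and> z < N"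
  by (simp add: box_cubes_def)

lemma diagonal_neighbors_same_color:
  assumes col: "slab_type_coloring (box_cubes L M N) c"
    and p: "(x,y,z) \<in> box_cubes L M N" and q: "(x',y',z') \<in> box_cubes L M N"
    and diag: "\<bar>x - x'\<bar> = 1" "\<bar>y - y'\<bar> = 1" "\<bar>z - z'\<bar> = 1"
  shows "c (x,y,z) = c (x',y',z')"
proof -
  define a b d where "a = min x x'" and "b = min y y'" and "d = min z z'"
  have "{a,a+1} \<times> {b,b+1} \<times> {d,d+1} \<subseteq> box_cubes L M N"
    using p q diag unfolding a_def b_def d_def by auto
  note opposite = opposite_corners_same_color[OF col this]
  have "x = a \<and> x' = a + 1 \<or> x = a + 1 \<and> x' = a" "y = b \<and> y' = b + 1 \<or> y = b + 1 \<and> y' = b"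
    "z = d \<and> z' = d + 1 \<or> z = d + 1 \<and> z' = d"
    using diag unfolding a_def b_def d_def by auto
  then show ?thesis
    using opposite by auto
qed

lemma common_unit_neighbor:
  fixes u v K :: int
  assumes "2 \<le> K" "0 \<le> u" "u < K" "0 \<le> v" "v < K" "\<bar>u - v\<bar> \<in> {0, 2}"
  shows "\<exists>w. 0 \<le> w \<and> w < K \<and> \<bar>u - w\<bar> = 1 \<and> \<bar>v - w\<bar> = 1"
proof (cases "u = v")
  case True
  then show ?thesis
    using assms by (intro exI[of _ "if u + 1 < K then u + 1 else u - 1"]) auto
next
  case False
  then show ?thesis
    using assms by (intro exI[of _ "(u + v) div 2"]) auto
qed

lemma same_color_two_apart:
  assumes col: "slab_type_coloring (box_cubes L M N) c" and dims: "2 \<le> L" "2 \<le> M" "2 \<le> N"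
    and p: "(x,y,z) \<in> box_cubes L M N" and q: "(x',y',z') \<in> box_cubes L M N"
    and apart: "\<bar>x - x'\<bar> \<in> {0,2}" "\<bar>y - y'\<bar> \<in> {0,2}" "\<bar>z - z'\<bar> \<in> {0,2}"
  shows "c (x,y,z) = c (x',y',z')"
proof -
  obtain u where u: "0 \<le> u" "u < L" "\<bar>x - u\<bar> = 1" "\<bar>x' - u\<bar> = 1"
    using common_unit_neighbor[of L x x'] dims p q apart by auto
  obtain v where v: "0 \<le> v" "v < M" "\<bar>y - v\<bar> = 1" "\<bar>y' - v\<bar> = 1"
    using common_unit_neighbor[of M y y'] dims p q apart by auto
  obtain w where w: "0 \<le> w" "w < N" "\<bar>z - w\<bar> = 1" "\<bar>z' - w\<bar> = 1"
    using common_unit_neighbor[of N z z'] dims p q apart by auto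
  have mid: "(u,v,w) \<in> box_cubes L M N"
    using u v w by simp
  show ?thesis
    using u v w diagonal_neighbors_same_color[OF col p mid] diagonal_neighbors_same_color[OF col q mid]
    by simp
qed

lemma color_mod_2:
  assumes col: "slab_type_coloring (box_cubes L M N) c" and dims: "2 \<le> L" "2 \<le> M" "2 \<le> N"
  shows "(x,y,z) \<in> box_cubes L M N \<Longrightarrow> c (x,y,z) = c (x mod 2, y mod 2, z mod 2)"
proof (induction "nat (x + y + z)" arbitrary: x y z rule: less_induct)
  case less
  show ?case
  proof (cases "x < 2 \<and> y < 2 \<and> z < 2")
    case True
    with less.prems show ?thesis by simp
  next
    case False
    define lower where "lower u = (if 2 \<le> u then u - 2 else u)" for u :: int
    have lower: "(lower x, lower y, lower z) \<in> box_cubes L M N"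
      using less.prems unfolding lower_def by auto
    have "c (x,y,z) = c (lower x, lower y, lower z)"
      by (rule same_color_two_apart[OF col dims less.prems lower]) (auto simp: lower_def)
    also have "\<dots> = c (lower x mod 2, lower y mod 2, lower z mod 2)"
      by (rule less.hyps[OF _ lower]) (use less.prems False in \<open>auto simp: lower_def\<close>)
    also have "(lower x mod 2, lower y mod 2, lower z mod 2) = (x mod 2, y mod 2, z mod 2)"
      unfolding lower_def by simp
    finally show ?thesis .
  qed
qed

lemma mod_2_less: "2 \<le> K \<Longrightarrow> u mod 2 < (K :: int)"
  using pos_mod_bound[of 2 u] by linarith

definition base_slab :: "cube set" where
  "base_slab = {(0,0,0), (1,0,0), (0,1,0), (1,1,0)}"

definition base_cube :: "cube \<Rightarrow> cube" where
  "base_cube = (\<lambda>(x,y,z). ((x + z) mod 2, (y + z) mod 2, 0))"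

lemma base_slab_in_slabs: "base_slab \<in> slabs"
  using slab_xy[of 0 0 0] by (simp add: base_slab_def)

lemma base_slab_subset_box: "2 \<le> L \<Longrightarrow> 2 \<le> M \<Longrightarrow> 1 \<le> N \<Longrightarrow> base_slab \<subseteq> box_cubes L M N"
  by (auto simp: base_slab_def)

lemma base_cube_in_base_slab: "base_cube p \<in> base_slab"
proof -
  have mod_2_cases: "u mod 2 = 0 \<or> u mod 2 = 1" for u :: int
    by presburger
  show ?thesis
    using mod_2_cases by (cases p) (auto simp: base_cube_def base_slab_def)
qed

lemma color_eq_base_color:
  assumes col: "slab_type_coloring (box_cubes L M N) c" and dims: "2 \<le> L" "2 \<le> M" "2 \<le> N"
    and p: "p \<in> box_cubes L M N"
  shows "c p = c (base_cube p)"
proof -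
  obtain x y z where xyz: "p = (x,y,z)"
    by (cases p)
  have "c (x,y,z) = c (x mod 2, y mod 2, z mod 2)"
    using color_mod_2[OF col dims] p xyz by simp
  also have "\<dots> = c ((x + z) mod 2, (y + z) mod 2, 0)"
  proof (cases "even z")
    case True
    then show ?thesis
      by (simp add: mod_add_right_eq[symmetric] even_iff_mod_2_eq_zero)
  next
    case False
    then have "z mod 2 = 1"
      by presburger
    moreover have "\<bar>x mod 2 - (x + z) mod 2\<bar> = 1" "\<bar>y mod 2 - (y + z) mod 2\<bar> = 1"
      using False by presburger+
    ultimately show ?thesis
      by (intro diagonal_neighbors_same_color[OF col]) (use dims in \<open>simp_all add: mod_2_less\<close>)
  qed
  finally show ?thesis
    by (simp add: xyz base_cube_def)
qed

lemma ex_bij_relabel: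
  assumes bij1: "bij_betw c1 F C" and bij2: "bij_betw c2 F C"
    and retract: "\<And>p. p \<in> R \<Longrightarrow> r p \<in> F \<and> c1 p = c1 (r p) \<and> c2 p = c2 (r p)"
  shows "\<exists>\<sigma>. bij_betw \<sigma> C C \<and> (\<forall>p\<in>R. c2 p = \<sigma> (c1 p))"
proof (intro exI conjI ballI)
  show "bij_betw (c2 \<circ> inv_into F c1) C C"
    using bij_betw_trans[OF bij_betw_inv_into[OF bij1] bij2] .
  fix p
  assume "p \<in> R"
  then show "c2 p = (c2 \<circ> inv_into F c1) (c1 p)"
    using retract bij_betw_imp_inj_on[OF bij1] by simp
qed

theorem lemma3p2:
  fixes L M N :: int
  assumes "min L (min M N) \<ge> 2"
  shows "(\<exists>col. slab_type_coloring (box_cubes L M N) col) \<and>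
         (\<forall>c1 c2. slab_type_coloring (box_cubes L M N) c1 \<longrightarrow>
                  slab_type_coloring (box_cubes L M N) c2 \<longrightarrow>
                  (\<exists>\<sigma>. bij_betw \<sigma> colors colors \<and>
                       (\<forall>p\<in>box_cubes L M N. c2 p = \<sigma> (c1 p))))"
proof (intro conjI allI impI)
  show "\<exists>col. slab_type_coloring (box_cubes L M N) col"
    using slab_type_coloring_standard by blast
  have dims: "2 \<le> L" "2 \<le> M" "2 \<le> N"
    using assms by auto
  have base: "base_slab \<in> slabs" "base_slab \<subseteq> box_cubes L M N"
    using base_slab_in_slabs base_slab_subset_box dims by auto
  fix c1 c2
  assume c1: "slab_type_coloring (box_cubes L M N) c1" and c2: "slab_type_coloring (box_cubes L M N) c2"
  show "\<exists>\<sigma>. bij_betw \<sigma> colors colors \<and> (\<forall>p\<in>box_cubes L M N. c2 p = \<sigma> (c1 p))"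
    by (rule ex_bij_relabel[where r = base_cube, OF slab_type_coloring_bij[OF c1 base]
          slab_type_coloring_bij[OF c2 base]])
      (simp add: base_cube_in_base_slab color_eq_base_color[OF c1 dims] color_eq_base_color[OF c2 dims])
qed

end
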